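(* Let $L_0\subset\mathbb{P}^2$ be a line which is not exceptional for $f$ and is disjoint from $\mathcal{I}$, and let $p_0\in\mathbb{P}^2$ be a point not in $L_0\cup f(L_0)$. Then there is a surjective linear map $T_0:\mathbb{P}^2\setminus\{p_0\}\to L_0$ such that $(T_0\circ f)|_{L_0}:L_0\to L_0$ is a hyperbolic rational map of degree $d$ (identifying $L_0\cong\mathbb{P}^1$).
   Context: $f:\mathbb{P}^2\dashrightarrow\mathbb{P}^2$ is a dominant rational map of algebraic degree $d$ with indeterminacy set $\mathcal{I}$; for a curve $V$, $f(V):=\overline{f(V\setminus\mathcal{I})}$; an irreducible curve $V$ is exceptional if $f(V)$ is a point. A surjective linear map $T_0:\mathbb{P}^2\setminus\{p_0\}\to L_0$ is one induced by a rank-2 linear map of $\mathbb{C}^3$ with kernel $p_0$ and image $L_0$. A rational map of $\mathbb{P}^1$ is hyperbolic if all its critical points lie in basins of attracting periodic points. *)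

theory Defs
  imports "HOL-Analysis.Analysis"
begin

text \<open>Points of P^2 are nonzero vectors
  of complex^3 up to nonzero scalars; subsets of P^2 are represented by the cones of
  their nonzero representatives.\<close>

definition hpoly3 :: "nat \<Rightarrow> (nat \<Rightarrow> nat \<Rightarrow> complex) \<Rightarrow> complex^3 \<Rightarrow> complex" where
  "hpoly3 d c v = (\<Sum>i\<le>d. \<Sum>j\<le>d - i. c i j * v$1 ^ i * v$2 ^ j * v$3 ^ (d - i - j))"

definition hpoly2 :: "nat \<Rightarrow> (nat \<Rightarrow> complex) \<Rightarrow> complex^2 \<Rightarrow> complex" where
  "hpoly2 d c v = (\<Sum>i\<le>d. c i * v$1 ^ i * v$2 ^ (d - i))"

definition Fv :: "nat \<Rightarrow> (3 \<Rightarrow> nat \<Rightarrow> nat \<Rightarrow> complex) \<Rightarrow> complex^3 \<Rightarrow> complex^3" where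
  "Fv d Fc v = (\<chi> k. hpoly3 d (Fc k) v)"

definition rat_map_P2 :: "nat \<Rightarrow> (3 \<Rightarrow> nat \<Rightarrow> nat \<Rightarrow> complex) \<Rightarrow> bool" where
  "rat_map_P2 d Fc \<longleftrightarrow>
     (\<exists>v. Fv d Fc v \<noteq> 0) \<and>
     \<not> (\<exists>e G H. 1 \<le> e \<and> e \<le> d \<and> (\<exists>w. hpoly3 e G w \<noteq> 0) \<and>
          (\<forall>k v. hpoly3 d (Fc k) v = hpoly3 e G v * hpoly3 (d - e) (H k) v))"

definition indet :: "nat \<Rightarrow> (3 \<Rightarrow> nat \<Rightarrow> nat \<Rightarrow> complex) \<Rightarrow> (complex^3) set" where
  "indet d Fc = {v. v \<noteq> 0 \<and> Fv d Fc v = 0}"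

definition zclosure :: "(complex^3) set \<Rightarrow> (complex^3) set" where
  "zclosure S = {w. w \<noteq> 0 \<and>
      (\<forall>e P. (\<forall>s\<in>S. hpoly3 e P s = 0) \<longrightarrow> hpoly3 e P w = 0)}"

definition fimage :: "nat \<Rightarrow> (3 \<Rightarrow> nat \<Rightarrow> nat \<Rightarrow> complex) \<Rightarrow> (complex^3) set \<Rightarrow> (complex^3) set" where
  "fimage d Fc V = zclosure {c *s Fv d Fc v | c v. c \<noteq> 0 \<and> v \<in> V \<and> v \<notin> indet d Fc}"

definition dominant :: "nat \<Rightarrow> (3 \<Rightarrow> nat \<Rightarrow> nat \<Rightarrow> complex) \<Rightarrow> bool" where
  "dominant d Fc \<longleftrightarrow> fimage d Fc (UNIV - {0}) = UNIV - {0}"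

definition ppoint :: "complex^3 \<Rightarrow> (complex^3) set" where
  "ppoint p = {c *s p | c. c \<noteq> 0}"

definition exceptional :: "nat \<Rightarrow> (3 \<Rightarrow> nat \<Rightarrow> nat \<Rightarrow> complex) \<Rightarrow> (complex^3) set \<Rightarrow> bool" where
  "exceptional d Fc V \<longleftrightarrow> (\<exists>p. p \<noteq> 0 \<and> fimage d Fc V = ppoint p)"

definition lin3 :: "complex^3 \<Rightarrow> complex^3 \<Rightarrow> complex" where
  "lin3 a v = (\<Sum>i\<in>UNIV. a$i * v$i)"

definition pline :: "complex^3 \<Rightarrow> (complex^3) set" where
  "pline a = {v. v \<noteq> 0 \<and> lin3 a v = 0}"

text \<open>A rational map of P^1 is represented by a homogeneous lift G : C^2 \<rightarrow> C^2.\<close>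

definition det2 :: "complex^2 \<Rightarrow> complex^2 \<Rightarrow> complex" where
  "det2 v w = v$1 * w$2 - v$2 * w$1"

definition pdist :: "complex^2 \<Rightarrow> complex^2 \<Rightarrow> real" where
  "pdist v w = cmod (det2 v w) / (norm v * norm w)"

definition rat_map_P1 :: "nat \<Rightarrow> (complex^2 \<Rightarrow> complex^2) \<Rightarrow> bool" where
  "rat_map_P1 d G \<longleftrightarrow> (\<exists>A B. \<forall>v. G v $ 1 = hpoly2 d A v \<and> G v $ 2 = hpoly2 d B v)
      \<and> (\<forall>v. v \<noteq> 0 \<longrightarrow> G v \<noteq> 0)"

definition dirderiv :: "(complex^2 \<Rightarrow> complex^2) \<Rightarrow> complex^2 \<Rightarrow> complex^2 \<Rightarrow> complex^2" where
  "dirderiv G p w = (\<chi> k. deriv (\<lambda>t. G (p + t *s w) $ k) 0)"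

text \<open>[c] is a critical point: the differential of [G] at [c] vanishes, i.e. every
  directional derivative of G at c is parallel to G(c).\<close>
definition critical_pt :: "(complex^2 \<Rightarrow> complex^2) \<Rightarrow> complex^2 \<Rightarrow> bool" where
  "critical_pt G c \<longleftrightarrow> c \<noteq> 0 \<and> (\<forall>w. det2 (G c) (dirderiv G c w) = 0)"

text \<open>[q] is periodic with G^n(q) = \<lambda> q, n \<ge> 1, and attracting: the multiplier m of
  [G^n] at [q], determined by det2 q (D(G^n)_q w) = \<lambda> m det2 q w, has |m| < 1.\<close>
definition attracting_periodic :: "(complex^2 \<Rightarrow> complex^2) \<Rightarrow> complex^2 \<Rightarrow> nat \<Rightarrow> bool" where
  "attracting_periodic G q n \<longleftrightarrow> q \<noteq> 0 \<and> 1 \<le> n \<and>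
     (\<exists>l. (G ^^ n) q = l *s q \<and>
        (\<forall>w. det2 q w \<noteq> 0 \<longrightarrow>
              cmod (det2 q (dirderiv (G ^^ n) q w)) < cmod (l * det2 q w)))"

definition in_attr_basin :: "(complex^2 \<Rightarrow> complex^2) \<Rightarrow> complex^2 \<Rightarrow> nat \<Rightarrow> complex^2 \<Rightarrow> bool" where
  "in_attr_basin G q n z \<longleftrightarrow> attracting_periodic G q n \<and>
     (\<lambda>k. pdist ((G ^^ (k * n)) z) q) \<longlonglongrightarrow> 0"

definition hyperbolic :: "(complex^2 \<Rightarrow> complex^2) \<Rightarrow> bool" where
  "hyperbolic G \<longleftrightarrow> (\<forall>c. critical_pt G c \<longrightarrow> (\<exists>q n. in_attr_basin G q n c))"

end

theory Submission
  imports Defs "HOL-Computational_Algebra.Fundamental_Theorem_Algebra"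
begin

text \<open>
  Take a linear map \<open>\<Lambda> : \<complex>\<^sup>3 \<rightarrow> \<complex>\<^sup>2\<close> with kernel \<open>\<complex> p\<^sub>0\<close> and a parametrisation
  \<open>B : \<complex>\<^sup>2 \<rightarrow> L\<^sub>0\<close>, and look for \<open>T\<^sub>0 = B A \<Lambda>\<close> with \<open>A\<close> invertible. Because \<open>L\<^sub>0\<close> misses the
  indeterminacy set and \<open>p\<^sub>0 \<notin> f(L\<^sub>0)\<close>, the map \<open>g = \<Lambda> F B\<close> is a pair of binary forms of degree
  \<open>d\<close> without common zero, and every basis of \<open>L\<^sub>0\<close> only conjugates \<open>A g\<close> by an invertible
  linear map, which preserves hyperbolicity.

  To choose \<open>A\<close>: up to scaling, \<open>g\<close> has finitely many critical points (the roots of a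
  Wronskian). A shear \<open>(x, y) \<mapsto> (x + s y, y)\<close> makes the first coordinate nonzero at their
  images and at \<open>g (1, 0)\<close>. Scaling the second coordinate by a small \<open>\<epsilon>\<close> then turns the
  induced map \<open>z \<mapsto> \<epsilon> g\<^sub>2(1, z) / (g\<^sub>1(1, z) + s g\<^sub>2(1, z))\<close> of the affine chart into a
  contraction of a small disc around \<open>0\<close> that contains all critical values. Its fixed point is
  attracting and attracts every critical point.
\<close>

section \<open>Binary forms\<close>

definition binary_form :: "nat \<Rightarrow> (complex^2 \<Rightarrow> complex) \<Rightarrow> bool" where
  "binary_form d f \<longleftrightarrow> (\<exists>c. \<forall>v. f v = hpoly2 d c v)"

lemma binary_form_const: "binary_form 0 (\<lambda>v. c)"
  unfolding binary_form_def hpoly2_def by (rule exI[of _ "\<lambda>_. c"]) simp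

lemma binary_form_zero: "binary_form d (\<lambda>v. 0)"
  unfolding binary_form_def hpoly2_def by (rule exI[of _ "\<lambda>_. 0"]) simp

lemma binary_form_add:
  "binary_form d f \<Longrightarrow> binary_form d g \<Longrightarrow> binary_form d (\<lambda>v. f v + g v)"
  unfolding binary_form_def hpoly2_def
  by (elim exE, rename_tac c c', rule_tac x="\<lambda>i. c i + c' i" in exI) (simp add: sum.distrib algebra_simps)

lemma binary_form_cmult: "binary_form d f \<Longrightarrow> binary_form d (\<lambda>v. c * f v)"
  unfolding binary_form_def hpoly2_def
  by (elim exE, rename_tac a, rule_tac x="\<lambda>i. c * a i" in exI) (simp add: sum_distrib_left algebra_simps)

lemma binary_form_sum:
  "finite S \<Longrightarrow> (\<And>i. i \<in> S \<Longrightarrow> binary_form d (f i)) \<Longrightarrow> binary_form d (\<lambda>v. \<Sum>i\<in>S. f i v)"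
  by (induction S rule: finite_induct) (auto intro: binary_form_add binary_form_zero)

lemma binary_form_mult_coord1: "binary_form d f \<Longrightarrow> binary_form (Suc d) (\<lambda>v. v$1 * f v)"
  unfolding binary_form_def
proof (elim exE)
  fix c assume f: "\<forall>v. f v = hpoly2 d c v"
  have "v$1 * f v = hpoly2 (Suc d) (\<lambda>i. if i = 0 then 0 else c (i - 1)) v" for v
    unfolding f[rule_format] hpoly2_def
    by (subst sum.atMost_Suc_shift) (simp add: sum_distrib_left algebra_simps)
  then show "\<exists>c. \<forall>v. v$1 * f v = hpoly2 (Suc d) c v" by blast
qed

lemma binary_form_mult_coord2: "binary_form d f \<Longrightarrow> binary_form (Suc d) (\<lambda>v. v$2 * f v)"
  unfolding binary_form_def
proof (elim exE)
  fix c assume f: "\<forall>v. f v = hpoly2 d c v"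
  have "v$2 * f v = hpoly2 (Suc d) (\<lambda>i. if i \<le> d then c i else 0) v" for v
    unfolding f[rule_format] hpoly2_def
    by (simp add: sum_distrib_left algebra_simps) (intro sum.cong refl, simp add: Suc_diff_le)
  then show "\<exists>c. \<forall>v. v$2 * f v = hpoly2 (Suc d) c v" by blast
qed

lemma binary_form_mult_linear_power:
  assumes "binary_form m f"
  shows "binary_form (k + m) (\<lambda>v. (\<alpha> * v$1 + \<beta> * v$2) ^ k * f v)"
proof (induction k)
  case (Suc k)
  have "binary_form (Suc (k + m)) (\<lambda>v. \<alpha> * (v$1 * ((\<alpha> * v$1 + \<beta> * v$2) ^ k * f v))
                                   + \<beta> * (v$2 * ((\<alpha> * v$1 + \<beta> * v$2) ^ k * f v)))"
    by (intro binary_form_add binary_form_cmult binary_form_mult_coord1 binary_form_mult_coord2 Suc)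
  then show ?case by (simp add: algebra_simps)
qed (simp add: assms)

lemma matrix_vector_mult_2cols:
  "((A :: 'a::semiring_1^2^'m) *v v) $ k = A$k$1 * v$1 + A$k$2 * v$2"
  by (simp add: matrix_vector_mult_def sum_2)

lemma hpoly3_comp_matrix: "binary_form d (\<lambda>v. hpoly3 d c ((B :: complex^2^3) *v v))"
  unfolding hpoly3_def
proof (intro binary_form_sum finite_atMost)
  fix i j assume "i \<in> {..d}" "j \<in> {..d - i}"
  then have deg: "i + (j + ((d - i - j) + 0)) = d" by auto
  have "binary_form (i + (j + ((d - i - j) + 0)))
     (\<lambda>v. (B$1$1 * v$1 + B$1$2 * v$2) ^ i * ((B$2$1 * v$1 + B$2$2 * v$2) ^ j *
           ((B$3$1 * v$1 + B$3$2 * v$2) ^ (d - i - j) * c i j)))"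
    by (intro binary_form_mult_linear_power binary_form_const)
  then show "binary_form d (\<lambda>v. c i j * (B *v v) $ 1 ^ i * (B *v v) $ 2 ^ j * (B *v v) $ 3 ^ (d - i - j))"
    unfolding deg by (simp add: matrix_vector_mult_2cols algebra_simps)
qed

lemma hpoly2_comp_matrix: "binary_form d (\<lambda>v. hpoly2 d c ((C :: complex^2^2) *v v))"
  unfolding hpoly2_def
proof (intro binary_form_sum finite_atMost)
  fix i assume "i \<in> {..d}"
  then have deg: "i + ((d - i) + 0) = d" by auto
  have "binary_form (i + ((d - i) + 0))
     (\<lambda>v. (C$1$1 * v$1 + C$1$2 * v$2) ^ i * ((C$2$1 * v$1 + C$2$2 * v$2) ^ (d - i) * c i))"
    by (intro binary_form_mult_linear_power binary_form_const)
  then show "binary_form d (\<lambda>v. c i * (C *v v) $ 1 ^ i * (C *v v) $ 2 ^ (d - i))"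
    unfolding deg by (simp add: matrix_vector_mult_2cols algebra_simps)
qed

lemma binary_form_comp_matrix:
  "binary_form d f \<Longrightarrow> binary_form d (\<lambda>v. f ((C :: complex^2^2) *v v))"
  using hpoly2_comp_matrix unfolding binary_form_def by (metis (no_types))

lemma binary_form_homogeneous: "binary_form d f \<Longrightarrow> f (c *s v) = c ^ d * f v"
  unfolding binary_form_def hpoly2_def
  by (auto simp: sum_distrib_left power_mult_distrib algebra_simps power_add[symmetric]
           intro!: sum.cong)

lemma binary_form_field_differentiable_on_line:
  assumes "binary_form d f"
  shows "(\<lambda>t. f (p + t *s w)) field_differentiable (at t)"
proof -
  obtain c where f: "\<And>v. f v = hpoly2 d c v" using assms unfolding binary_form_def by blast
  have "(\<lambda>t. \<Sum>i\<le>d. c i * (p$1 + t * w$1) ^ i * (p$2 + t * w$2) ^ (d - i)) field_differentiable (at t)"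
    unfolding field_differentiable_def by (rule exI, intro derivative_eq_intros) auto
  then show ?thesis by (simp add: f hpoly2_def)
qed

lemma binary_form_dehomogenize:
  assumes "binary_form d f"
  obtains p where "\<And>z. poly p z = f (vector [1, z])" "coeff p d = f (vector [0, 1])" "degree p \<le> d"
proof -
  obtain c where f: "\<And>v. f v = hpoly2 d c v" using assms unfolding binary_form_def by blast
  define p where "p = (\<Sum>i\<le>d. monom (c i) (d - i))"
  show ?thesis
  proof (rule that[of p])
    show "poly p z = f (vector [1, z])" for z
      unfolding p_def f hpoly2_def by (simp add: poly_sum poly_monom)
    have "coeff p d = (\<Sum>i\<le>d. if i = 0 then c i else 0)"
      unfolding p_def coeff_sum coeff_monom by (intro sum.cong refl) auto
    then show "coeff p d = f (vector [0, 1])"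
      unfolding f hpoly2_def by (simp add: power_0_left sum.atMost_shift sum.delta)
    show "degree p \<le> d"
      unfolding p_def by (intro degree_sum_le) (auto intro: order.trans[OF degree_monom_le])
  qed
qed

definition form_map :: "nat \<Rightarrow> (complex^2 \<Rightarrow> complex^2) \<Rightarrow> bool" where
  "form_map d H \<longleftrightarrow> (\<forall>k. binary_form d (\<lambda>v. H v $ k))"

lemma rat_map_P1_iff: "rat_map_P1 d G \<longleftrightarrow> form_map d G \<and> (\<forall>v. v \<noteq> 0 \<longrightarrow> G v \<noteq> 0)"
  unfolding rat_map_P1_def form_map_def binary_form_def forall_2 by blast

lemma form_map_homogeneous: "form_map d H \<Longrightarrow> H (c *s v) = c ^ d *s H v"
  unfolding form_map_def vec_eq_iff by (auto intro: binary_form_homogeneous[where f="\<lambda>v. H v $ _", simplified])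

lemma form_map_funpow_homogeneous:
  assumes "form_map d H"
  shows "(H ^^ k) (m *s v) = m ^ (d ^ k) *s (H ^^ k) v"
  by (induction k) (simp_all add: form_map_homogeneous[OF assms] power_mult[symmetric] mult.commute)

lemma form_map_matrix_mult: "form_map d H \<Longrightarrow> form_map d (\<lambda>v. (A :: complex^2^2) *v H v)"
  unfolding form_map_def matrix_vector_mult_2cols by (auto intro!: binary_form_add binary_form_cmult)

lemma form_map_comp_matrix: "form_map d H \<Longrightarrow> form_map d (\<lambda>v. H ((C :: complex^2^2) *v v))"
  unfolding form_map_def by (auto intro: binary_form_comp_matrix)

lemma form_map_has_derivative_on_line:
  assumes "form_map d H"
  shows "((\<lambda>t. H (p + t *s w) $ k) has_field_derivative deriv (\<lambda>t. H (p + t *s w) $ k) t) (at t)"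
  using assms binary_form_field_differentiable_on_line DERIV_deriv_iff_field_differentiable
  unfolding form_map_def by blast

lemma dirderiv_matrix_mult:
  assumes "form_map d H"
  shows "dirderiv (\<lambda>v. (A :: complex^2^2) *v H v) p w = A *v dirderiv H p w"
proof -
  have "((\<lambda>t. A$k$1 * H (p + t *s w) $ 1 + A$k$2 * H (p + t *s w) $ 2) has_field_derivative
      A$k$1 * deriv (\<lambda>t. H (p + t *s w) $ 1) 0 + A$k$2 * deriv (\<lambda>t. H (p + t *s w) $ 2) 0) (at 0)"
    for k by (intro derivative_intros DERIV_cmult form_map_has_derivative_on_line[OF assms])
  then show ?thesis
    unfolding dirderiv_def vec_eq_iff matrix_vector_mult_2cols by (simp add: DERIV_imp_deriv)
qed

lemma dirderiv_comp_matrix: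
  "dirderiv (\<lambda>v. H ((C :: complex^2^2) *v v)) p w = dirderiv H (C *v p) (C *v w)"
  unfolding dirderiv_def by (simp add: matrix_vector_right_distrib vector_scalar_commute)

lemma det2_matrix_mult: "det2 ((A :: complex^2^2) *v x) (A *v y) = det A * det2 x y"
  unfolding det2_def det_2 matrix_vector_mult_2cols by (simp add: algebra_simps)

lemma invertible_matrix_vector_eq_0:
  "invertible (A :: 'a::field^'n^'n) \<Longrightarrow> A *v x = 0 \<longleftrightarrow> x = 0"
  by (metis inj_matrix_vector_mult injD matrix_vector_mult_0_right)

lemma invertible_surj_matrix_vector:
  assumes "invertible (A :: 'a::field^'n^'n)"
  obtains x where "A *v x = y"
proof -
  obtain A' where "A ** A' = mat 1" using assms unfolding invertible_def by blast
  then show ?thesis using that[of "A' *v y"] by (simp add: matrix_vector_mul_assoc)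
qed

lemma norm_vec_scale: "norm (c *s (x :: complex^'n)) = norm c * norm x"
  unfolding norm_vec_def by (simp add: L2_set_right_distrib norm_mult)

lemma pdist_scale_left: "c \<noteq> 0 \<Longrightarrow> pdist (c *s x) y = pdist x y"
proof -
  assume "c \<noteq> 0"
  moreover have "det2 (c *s x) y = c * det2 x y" unfolding det2_def by (simp add: algebra_simps)
  ultimately show ?thesis unfolding pdist_def by (simp add: norm_vec_scale norm_mult)
qed

lemma pdist_nonneg: "pdist x y \<ge> 0"
  unfolding pdist_def by simp

lemma pdist_le_matrix_pdist:
  assumes "invertible (C :: complex^2^2)"
  obtains K where "\<And>x y. pdist x y \<le> K * pdist (C *v x) (C *v y)"
proof -
  obtain B where B: "B > 0" "\<And>x. norm (C *v x) \<le> norm x * B"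
    using bounded_linear.pos_bounded[OF matrix_vector_mul_bounded_linear] by blast
  have dC: "cmod (det C) > 0" using assms invertible_det_nz by auto
  have "pdist x y \<le> B\<^sup>2 / cmod (det C) * pdist (C *v x) (C *v y)" for x y
  proof (cases "x = 0 \<or> y = 0")
    case True
    then show ?thesis using dC by (auto simp: pdist_def det2_def intro!: mult_nonneg_nonneg)
  next
    case False
    then have pos: "norm x > 0" "norm y > 0" "norm (C *v x) > 0" "norm (C *v y) > 0"
      using invertible_matrix_vector_eq_0[OF assms] by auto
    have "norm (C *v x) * norm (C *v y) \<le> (norm x * B) * (norm y * B)"
      using B pos by (intro mult_mono) auto
    then have "cmod (det C) * cmod (det2 x y) / (B\<^sup>2 * (norm x * norm y))
             \<le> cmod (det C) * cmod (det2 x y) / (norm (C *v x) * norm (C *v y))"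
      using pos B by (intro divide_left_mono) (auto simp: power2_eq_square algebra_simps)
    then show ?thesis
      using dC B pos unfolding pdist_def det2_matrix_mult norm_mult
      by (simp add: field_simps power2_eq_square)
  qed
  then show ?thesis using that by blast
qed

lemma pdist_affine_chart_le: "pdist (vector [1, a]) (vector [1, b]) \<le> cmod (a - b)"
proof -
  have n: "1 \<le> norm (vector [1, z] :: complex^2)" for z
    using Finite_Cartesian_Product.norm_nth_le[of "vector [1, z] :: complex^2" 1] by simp
  have "1 * 1 \<le> norm (vector [1, a] :: complex^2) * norm (vector [1, b] :: complex^2)"
    by (intro mult_mono n) auto
  then have "cmod (b - a) / (norm (vector [1, a] :: complex^2) * norm (vector [1, b] :: complex^2))
             \<le> cmod (b - a) / 1"
    by (intro divide_left_mono) auto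
  then show ?thesis unfolding pdist_def det2_def by (simp add: norm_minus_commute)
qed

definition hyperbolic_fixed :: "(complex^2 \<Rightarrow> complex^2) \<Rightarrow> bool" where
  "hyperbolic_fixed H \<longleftrightarrow> (\<forall>c. critical_pt H c \<longrightarrow> (\<exists>q. in_attr_basin H q 1 c))"

lemma hyperbolic_fixed_imp_hyperbolic: "hyperbolic_fixed H \<Longrightarrow> hyperbolic H"
  unfolding hyperbolic_fixed_def hyperbolic_def by blast

lemma funpow_conj_matrix:
  assumes "\<And>v. C *v G v = H (C *v v)"
  shows "C *v (G ^^ k) v = (H ^^ k) (C *v v)"
  by (induction k) (simp_all add: assms)

lemma critical_pt_conj_matrix:
  assumes C: "invertible C" and G: "form_map d G" and conj: "\<And>v. C *v G v = H (C *v v)"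
    and crit: "critical_pt G c"
  shows "critical_pt H (C *v c)"
  unfolding critical_pt_def
proof (intro conjI allI)
  show "C *v c \<noteq> 0" using crit invertible_matrix_vector_eq_0[OF C] by (simp add: critical_pt_def)
  fix w
  obtain w' where w': "C *v w' = w" using invertible_surj_matrix_vector[OF C] by blast
  have "dirderiv H (C *v c) w = C *v dirderiv G c w'"
    unfolding w'[symmetric] dirderiv_comp_matrix[symmetric] conj[symmetric] dirderiv_matrix_mult[OF G] ..
  then show "det2 (H (C *v c)) (dirderiv H (C *v c) w) = 0"
    using crit unfolding conj[symmetric] critical_pt_def by (simp add: det2_matrix_mult)
qed

lemma attracting_fixed_point_conj_matrix:
  assumes C: "invertible C" and G: "form_map d G" and conj: "\<And>v. C *v G v = H (C *v v)"
    and att: "attracting_periodic H (C *v q) 1"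
  shows "attracting_periodic G q 1"
proof -
  obtain l where q0: "C *v q \<noteq> 0" and Hq: "H (C *v q) = l *s (C *v q)"
    and mult: "\<And>w. det2 (C *v q) w \<noteq> 0 \<Longrightarrow>
      cmod (det2 (C *v q) (dirderiv H (C *v q) w)) < cmod (l * det2 (C *v q) w)"
    using att unfolding attracting_periodic_def by auto
  have dC: "det C \<noteq> 0" using C invertible_det_nz by blast
  show ?thesis
    unfolding attracting_periodic_def
  proof (intro conjI exI allI impI)
    show "q \<noteq> 0" using q0 by auto
    have "C *v G q = C *v (l *s q)" by (simp add: conj Hq vector_scalar_commute)
    then show "(G ^^ 1) q = l *s q" using injD[OF inj_matrix_vector_mult[OF C]] by simp
    fix w assume w: "det2 q w \<noteq> 0"
    have "det2 (C *v q) (dirderiv H (C *v q) (C *v w)) = det C * det2 q (dirderiv G q w)"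
      unfolding dirderiv_comp_matrix[symmetric] conj[symmetric]
        dirderiv_matrix_mult[OF G] det2_matrix_mult ..
    then have "cmod (det C) * cmod (det2 q (dirderiv G q w)) < cmod (det C) * cmod (l * det2 q w)"
      using mult[of "C *v w"] w dC by (simp add: det2_matrix_mult norm_mult mult.left_commute)
    then show "cmod (det2 q (dirderiv (G ^^ 1) q w)) < cmod (l * det2 q w)"
      using mult_less_cancel_left_pos[of "cmod (det C)"] dC by simp
  qed simp
qed

lemma pdist_funpow_conj_matrix_tendsto:
  assumes C: "invertible C" and conj: "\<And>v. C *v G v = H (C *v v)"
    and conv: "(\<lambda>k. pdist ((H ^^ k) (C *v c)) (C *v q)) \<longlonglongrightarrow> 0"
  shows "(\<lambda>k. pdist ((G ^^ k) c) q) \<longlonglongrightarrow> 0"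
proof -
  obtain K where K: "\<And>x y. pdist x y \<le> K * pdist (C *v x) (C *v y)"
    using pdist_le_matrix_pdist[OF C] by blast
  have "pdist ((G ^^ k) c) q \<le> K * pdist ((H ^^ k) (C *v c)) (C *v q)" for k
    using K[of "(G ^^ k) c" q] unfolding funpow_conj_matrix[of C G H, OF conj] .
  then have "\<forall>\<^sub>F k in sequentially. norm (pdist ((G ^^ k) c) q) \<le> K * pdist ((H ^^ k) (C *v c)) (C *v q)"
    by (simp add: pdist_nonneg always_eventually)
  then show ?thesis by (rule Lim_null_comparison[OF _ tendsto_mult_right_zero[OF conv]])
qed

lemma hyperbolic_fixed_conj_matrix:
  assumes C: "invertible C" and G: "form_map d G" and conj: "\<And>v. C *v G v = H (C *v v)"
    and hyp: "hyperbolic_fixed H"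
  shows "hyperbolic_fixed G"
  unfolding hyperbolic_fixed_def
proof (intro allI impI)
  fix c assume "critical_pt G c"
  then have "critical_pt H (C *v c)" by (rule critical_pt_conj_matrix[of C d G H, OF C G conj])
  then obtain q' where "in_attr_basin H q' 1 (C *v c)" using hyp unfolding hyperbolic_fixed_def by blast
  moreover obtain q where "C *v q = q'" using invertible_surj_matrix_vector[OF C] by blast
  ultimately have "attracting_periodic H (C *v q) 1" "(\<lambda>k. pdist ((H ^^ k) (C *v c)) (C *v q)) \<longlonglongrightarrow> 0"
    unfolding in_attr_basin_def by simp_all
  then show "\<exists>q. in_attr_basin G q 1 c"
    unfolding in_attr_basin_def
    using attracting_fixed_point_conj_matrix[of C d G H, OF C G conj]
      pdist_funpow_conj_matrix_tendsto[of C G H, OF C conj] by auto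
qed

section \<open>Critical points and multipliers in the affine chart\<close>

lemma complex_poly_root_exists: "degree (p :: complex poly) \<noteq> 0 \<Longrightarrow> \<exists>z. poly p z = 0"
  by (metis constant_degree fundamental_theorem_of_algebra)

lemma wronskian_nonzero_at_root:
  fixes p1 p2 :: "complex poly"
  assumes deg: "degree p1 \<noteq> 0" and root: "poly p1 z = 0" and p2: "poly p2 z \<noteq> 0"
  shows "p1 * pderiv p2 \<noteq> p2 * pderiv p1"
proof
  assume W: "p1 * pderiv p2 = p2 * pderiv p1"
  have p1: "p1 \<noteq> 0" "poly p1 z = 0" using deg root by auto
  have "p2 \<noteq> 0" using p2 by auto
  have dp1: "pderiv p1 \<noteq> 0" using deg by (simp add: pderiv_eq_0_iff)
  then have dp2: "pderiv p2 \<noteq> 0" using W \<open>p2 \<noteq> 0\<close> by auto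
  have "order z (p1 * pderiv p2) = Suc (order z (pderiv p1)) + order z (pderiv p2)"
    using p1 dp2 order_pderiv[OF p1] by (simp add: order_mult)
  moreover have "order z (p2 * pderiv p1) = order z (pderiv p1)"
    using \<open>p2 \<noteq> 0\<close> dp1 order_0I[OF p2] by (simp add: order_mult)
  ultimately show False using W by simp
qed

lemma wronskian_nonzero:
  fixes p1 p2 :: "complex poly"
  assumes d1: "d \<ge> 1" and deg1: "degree p1 \<le> d" and deg2: "degree p2 \<le> d"
    and nocom: "\<And>z. \<not> (poly p1 z = 0 \<and> poly p2 z = 0)"
    and noinf: "\<not> (coeff p1 d = 0 \<and> coeff p2 d = 0)"
  shows "p1 * pderiv p2 - p2 * pderiv p1 \<noteq> 0"
proof (cases "degree p1 = 0")
  case True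
  then have "coeff p1 d = 0" using d1 by (auto intro: coeff_eq_0)
  then have "degree p2 = d" using noinf deg2 le_degree le_antisym by blast
  then have "degree p2 \<noteq> 0" using d1 by simp
  then obtain z where "poly p2 z = 0" using complex_poly_root_exists by blast
  then have "p1 \<noteq> 0" "pderiv p1 = 0" using nocom True by (auto simp: pderiv_eq_0_iff)
  moreover have "pderiv p2 \<noteq> 0" using \<open>degree p2 \<noteq> 0\<close> by (simp add: pderiv_eq_0_iff)
  ultimately show ?thesis by simp
next
  case False
  then obtain z where "poly p1 z = 0" using complex_poly_root_exists by blast
  then show ?thesis using wronskian_nonzero_at_root[OF False] nocom by auto
qed

lemma critical_pt_matrix_mult:
  assumes "form_map d g" "invertible A" "critical_pt (\<lambda>v. A *v g v) c"
  shows "critical_pt g c"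
proof -
  have "det A \<noteq> 0" using assms(2) invertible_det_nz by blast
  then show ?thesis
    using assms(3) unfolding critical_pt_def dirderiv_matrix_mult[OF assms(1)] det2_matrix_mult by simp
qed

lemma critical_pt_wronskian_root:
  assumes gf: "form_map d g" and d1: "d \<ge> 1"
    and p1: "\<And>z. poly p1 z = g (vector [1, z]) $ 1" and p2: "\<And>z. poly p2 z = g (vector [1, z]) $ 2"
    and cc: "critical_pt g c" and a: "c$1 \<noteq> 0"
  shows "poly (p1 * pderiv p2 - p2 * pderiv p1) (c$2 / c$1) = 0"
proof -
  let ?a = "c$1" and ?z = "c$2 / c$1"
  define w :: "complex^2" where "w = vector [0, 1]"
  have ceq: "c + t *s w = ?a *s vector [1, (c$2 + t) / ?a]" for t
    using a by (simp add: vec_eq_iff forall_2 w_def)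
  have gk: "g (c + t *s w) $ k = ?a ^ d * g (vector [1, (c$2 + t) / ?a]) $ k" for t k
    unfolding ceq form_map_homogeneous[OF gf] by simp
  have der: "deriv (\<lambda>t. g (c + t *s w) $ k) 0 = ?a ^ d * poly (pderiv p) ?z * (1 / ?a)"
    if pk: "\<And>z. poly p z = g (vector [1, z]) $ k" for p k
  proof -
    have "((\<lambda>t. (c$2 + t) / ?a) has_field_derivative 1 / ?a) (at 0)"
      using a by (auto intro!: derivative_eq_intros)
    from DERIV_chain2[OF poly_DERIV[of p] this]
    have "((\<lambda>t. ?a ^ d * poly p ((c$2 + t) / ?a)) has_field_derivative ?a ^ d * (poly (pderiv p) ?z * (1 / ?a))) (at 0)"
      by (intro DERIV_cmult) simp
    then show ?thesis unfolding gk pk[symmetric] by (simp add: DERIV_imp_deriv)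
  qed
  have gc: "g c $ k = ?a ^ d * poly p ?z" if pk: "\<And>z. poly p z = g (vector [1, z]) $ k" for p k
    using gk[of 0 k] pk by (simp add: w_def)
  have "det2 (g c) (dirderiv g c w) = 0" using cc unfolding critical_pt_def by simp
  then have "(?a ^ d * poly p1 ?z) * (?a ^ d * poly (pderiv p2) ?z * (1 / ?a))
           - (?a ^ d * poly p2 ?z) * (?a ^ d * poly (pderiv p1) ?z * (1 / ?a)) = 0"
    unfolding det2_def dirderiv_def using gc[OF p1] gc[OF p2] der[OF p1] der[OF p2] by simp
  then have "(?a ^ d * ?a ^ d * (1 / ?a)) * (poly p1 ?z * poly (pderiv p2) ?z - poly p2 ?z * poly (pderiv p1) ?z) = 0"
    by (simp add: algebra_simps)
  moreover have "?a ^ d * ?a ^ d * (1 / ?a) \<noteq> 0" using a by simp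
  ultimately show ?thesis by simp
qed

lemma form_map_on_line_in_chart:
  fixes zs t :: complex and w :: "complex^2"
  assumes Hf: "form_map d H" and HPQ: "\<And>z. H (vector [1, z]) = vector [poly P z, poly Q z]"
    and t: "1 + t * w$1 \<noteq> 0"
  defines "\<sigma> \<equiv> (zs + t * w$2) / (1 + t * w$1)"
  shows "H (vector [1, zs] + t *s w) = (1 + t * w$1) ^ d *s vector [poly P \<sigma>, poly Q \<sigma>]"
proof -
  have "(1 + t * w$1) * \<sigma> = zs + t * w$2" using t unfolding \<sigma>_def by simp
  then have "vector [1, zs] + t *s w = (1 + t * w$1) *s vector [1, \<sigma>]"
    by (simp add: vec_eq_iff forall_2 algebra_simps)
  then show ?thesis by (simp only: form_map_homogeneous[OF Hf] HPQ)
qed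

lemma det2_dirderiv_at_chart_fixed_point:
  assumes Hf: "form_map d H"
    and HPQ: "\<And>z. H (vector [1, z]) = vector [poly P z, poly Q z]"
    and fixQ: "poly Q zs = zs * poly P zs"
  shows "det2 (vector [1, zs]) (dirderiv H (vector [1, zs]) w)
         = (poly (pderiv Q) zs - zs * poly (pderiv P) zs) * det2 (vector [1, zs]) w"
proof -
  define q :: "complex^2" where "q = vector [1, zs]"
  define f where "f t = H (q + t *s w) $ 2 - zs * H (q + t *s w) $ 1" for t
  have "(f has_field_derivative deriv (\<lambda>t. H (q + t *s w) $ 2) 0 - zs * deriv (\<lambda>t. H (q + t *s w) $ 1) 0) (at 0)"
    unfolding f_def by (intro DERIV_diff DERIV_cmult form_map_has_derivative_on_line[OF Hf])
  then have lhs: "det2 q (dirderiv H q w) = deriv f 0"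
    by (simp add: DERIV_imp_deriv det2_def dirderiv_def q_def)
  define \<sigma> where "\<sigma> t = (zs + t * w$2) / (1 + t * w$1)" for t
  define h where "h t = (1 + t * w$1) ^ d * (poly Q (\<sigma> t) - zs * poly P (\<sigma> t))" for t
  define S where "S = {t. 1 + t * w$1 \<noteq> 0}"
  have S: "open S" "0 \<in> S" unfolding S_def
    by (auto intro!: open_Collect_neq continuous_intros)
  have fh: "f t = h t" if "t \<in> S" for t
    using form_map_on_line_in_chart[OF Hf HPQ, of t w zs] that
    unfolding f_def h_def q_def \<sigma>_def S_def by (simp add: algebra_simps)
  have ds: "(\<sigma> has_field_derivative (w$2 - zs * w$1)) (at 0)" "\<sigma> 0 = zs"
    unfolding \<sigma>_def by (auto intro!: derivative_eq_intros)
  have dpoly: "((\<lambda>t. poly R (\<sigma> t)) has_field_derivative poly (pderiv R) zs * (w$2 - zs * w$1)) (at 0)"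
    for R using DERIV_chain2[OF poly_DERIV[of R] ds(1)] ds(2) by simp
  have "((\<lambda>t. (1 + t * w$1) ^ d) has_field_derivative of_nat d * (1 + 0 * w$1) ^ (d - 1) * w$1) (at 0)"
    by (auto intro!: derivative_eq_intros)
  from DERIV_mult[OF this DERIV_diff[OF dpoly DERIV_cmult[OF dpoly]]]
  have "(h has_field_derivative
      (of_nat d * (1 + 0 * w$1) ^ (d - 1) * w$1) * (poly Q (\<sigma> 0) - zs * poly P (\<sigma> 0))
      + (poly (pderiv Q) zs * (w$2 - zs * w$1) - zs * (poly (pderiv P) zs * (w$2 - zs * w$1)))
        * (1 + 0 * w$1) ^ d) (at 0)"
    unfolding h_def .
  then have "(h has_field_derivative (poly (pderiv Q) zs - zs * poly (pderiv P) zs) * (w$2 - zs * w$1)) (at 0)"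
    using fixQ ds(2) by (simp add: algebra_simps)
  then have "(f has_field_derivative (poly (pderiv Q) zs - zs * poly (pderiv P) zs) * (w$2 - zs * w$1)) (at 0)"
    by (rule has_field_derivative_transform_within_open[OF _ S]) (simp add: fh)
  then show ?thesis using lhs unfolding q_def by (simp add: DERIV_imp_deriv det2_def)
qed

section \<open>Making a rational map of \<open>\<P>\<^sup>1\<close> hyperbolic by a linear change of coordinates\<close>

lemma vector_chart_nonzero: "vector [1, z] \<noteq> (0 :: complex^2)" "vector [0, 1] \<noteq> (0 :: complex^2)"
  by (metis vector_2(1) zero_index zero_neq_one, metis vector_2(2) zero_index zero_neq_one)

lemma critical_pts_finite_representatives:
  assumes gf: "form_map d g" and d1: "d \<ge> 1" and nz: "\<And>v. v \<noteq> 0 \<Longrightarrow> g v \<noteq> 0"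
  obtains X where "finite X" "0 \<notin> X" "\<And>c. critical_pt g c \<Longrightarrow> \<exists>m x. m \<noteq> 0 \<and> x \<in> X \<and> c = m *s x"
proof -
  obtain p1 where p1: "\<And>z. poly p1 z = g (vector [1, z]) $ 1"
    and p1_inf: "coeff p1 d = g (vector [0, 1]) $ 1" and p1_deg: "degree p1 \<le> d"
    using binary_form_dehomogenize gf unfolding form_map_def by blast
  obtain p2 where p2: "\<And>z. poly p2 z = g (vector [1, z]) $ 2"
    and p2_inf: "coeff p2 d = g (vector [0, 1]) $ 2" and p2_deg: "degree p2 \<le> d"
    using binary_form_dehomogenize gf unfolding form_map_def by blast
  define W where "W = p1 * pderiv p2 - p2 * pderiv p1"
  have "W \<noteq> 0" unfolding W_def
  proof (rule wronskian_nonzero[OF d1 p1_deg p2_deg])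
    show "\<not> (poly p1 z = 0 \<and> poly p2 z = 0)" for z
      using nz[OF vector_chart_nonzero(1)] unfolding p1 p2 by (simp add: vec_eq_iff forall_2)
    show "\<not> (coeff p1 d = 0 \<and> coeff p2 d = 0)"
      using nz[OF vector_chart_nonzero(2)] unfolding p1_inf p2_inf by (simp add: vec_eq_iff forall_2)
  qed
  define X :: "(complex^2) set" where
    "X = insert (vector [0, 1]) ((\<lambda>z. vector [1, z]) ` {z. poly W z = 0})"
  show ?thesis
  proof (rule that[of X])
    show "finite X" unfolding X_def using poly_roots_finite[OF \<open>W \<noteq> 0\<close>] by simp
    show "0 \<notin> X" unfolding X_def using vector_chart_nonzero by auto
    fix c assume cc: "critical_pt g c"
    show "\<exists>m x. m \<noteq> 0 \<and> x \<in> X \<and> c = m *s x"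
    proof (cases "c$1 = 0")
      case True
      then have "c$2 \<noteq> 0" "c = c$2 *s vector [0, 1]"
        using cc unfolding critical_pt_def by (auto simp: vec_eq_iff forall_2)
      then show ?thesis unfolding X_def by (intro exI[of _ "c$2"] exI[of _ "vector [0, 1]"]) simp
    next
      case False
      have "poly W (c$2 / c$1) = 0"
        unfolding W_def by (rule critical_pt_wronskian_root[OF gf d1 p1 p2 cc False])
      moreover have "c = c$1 *s vector [1, c$2 / c$1]" using False by (simp add: vec_eq_iff forall_2)
      ultimately show ?thesis using False unfolding X_def
        by (intro exI[of _ "c$1"] exI[of _ "vector [1, c$2 / c$1]"]) simp
    qed
  qed
qed

lemma exists_nonvanishing_combination:
  fixes g :: "'a \<Rightarrow> complex^2"
  assumes "finite X" and nz: "\<And>x. x \<in> X \<Longrightarrow> g x \<noteq> 0"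
  obtains s :: complex where "\<And>x. x \<in> X \<Longrightarrow> g x $ 1 + s * g x $ 2 \<noteq> 0"
proof -
  obtain s where s: "s \<notin> (\<lambda>x. - (g x $ 1) / (g x $ 2)) ` X"
    using ex_new_if_finite[OF infinite_UNIV_char_0] assms(1) by blast
  have "g x $ 1 + s * g x $ 2 \<noteq> 0" if x: "x \<in> X" for x
  proof (cases "g x $ 2 = 0")
    case True
    then show ?thesis using nz[OF x] by (auto simp: vec_eq_iff forall_2)
  next
    case False
    show ?thesis
    proof
      assume "g x $ 1 + s * g x $ 2 = 0"
      then have "s = - (g x $ 1) / (g x $ 2)" using False by (simp add: field_simps add_eq_0_iff)
      then show False using s x by blast
    qed
  qed
  then show ?thesis using that by blast
qed

lemma contraction_fixed_point_geometric:
  fixes T :: "'a::metric_space \<Rightarrow> 'a"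
  assumes "complete S" "S \<noteq> {}" "0 \<le> c" "c < 1" "T ` S \<subseteq> S"
    and lip: "\<And>x y. x \<in> S \<Longrightarrow> y \<in> S \<Longrightarrow> dist (T x) (T y) \<le> c * dist x y"
  obtains z0 where "z0 \<in> S" "T z0 = z0" "\<And>z k. z \<in> S \<Longrightarrow> dist ((T ^^ k) z) z0 \<le> c ^ k * dist z z0"
proof -
  obtain z0 where z0: "z0 \<in> S" "T z0 = z0"
    using Banach_fix[OF assms(1-5) lip] by blast
  have "(T ^^ k) z \<in> S \<and> dist ((T ^^ k) z) z0 \<le> c ^ k * dist z z0" if "z \<in> S" for z k
  proof (induction k)
    case (Suc k)
    then have "dist ((T ^^ Suc k) z) z0 \<le> c * (c ^ k * dist z z0)"
      using lip[of "(T ^^ k) z" z0] z0 \<open>c \<ge> 0\<close> by (auto intro: order.trans mult_left_mono)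
    then show ?case using Suc assms(5) by auto
  qed (use that in simp)
  then show ?thesis using that z0 by blast
qed

lemma small_multiple_contracts_on_disc:
  fixes D P :: "complex poly" and Z :: "complex set"
  assumes D0: "poly D 0 \<noteq> 0" and Z: "finite Z"
  obtains r \<epsilon> :: real where "r > 0" "\<epsilon> > 0"
    "\<And>z. z \<in> cball 0 r \<Longrightarrow> poly D z \<noteq> 0"
    "\<And>z. z \<in> cball 0 r \<Longrightarrow> cmod (of_real \<epsilon> * (poly P z / poly D z)) \<le> r"
    "\<And>z. z \<in> cball 0 r \<Longrightarrow>
       cmod (of_real \<epsilon> * ((poly (pderiv P) z * poly D z - poly P z * poly (pderiv D) z) / (poly D z)\<^sup>2))
       \<le> 1 / 2"
    "\<And>w. w \<in> Z \<Longrightarrow> cmod (of_real \<epsilon> * w) \<le> r"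
proof -
  obtain r where r: "r > 0" "cball 0 r \<subseteq> {z. poly D z \<noteq> 0}"
  proof -
    have "open {z. poly D z \<noteq> 0}" by (intro open_Collect_neq continuous_intros)
    then obtain e where "e > 0" "ball 0 e \<subseteq> {z. poly D z \<noteq> 0}"
      using D0 open_contains_ball_eq by blast
    moreover have "cball (0::complex) (e / 2) \<subseteq> ball 0 e" using \<open>e > 0\<close> by (simp add: cball_subset_ball_iff)
    ultimately show ?thesis using that[of "e / 2"] by auto
  qed
  define R where "R z = poly P z / poly D z" for z
  define R' where
    "R' z = (poly (pderiv P) z * poly D z - poly P z * poly (pderiv D) z) / (poly D z)\<^sup>2" for z
  have "continuous_on (cball 0 r) R" "continuous_on (cball 0 r) R'"
    unfolding R_def R'_def using r(2) by (auto intro!: continuous_intros)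
  then have "bounded (R ` cball 0 r \<union> R' ` cball 0 r \<union> Z)"
    using Z by (simp add: finite_imp_bounded compact_imp_bounded compact_continuous_image)
  then obtain M where M: "M > 0" "\<And>w. w \<in> R ` cball 0 r \<union> R' ` cball 0 r \<union> Z \<Longrightarrow> norm w \<le> M"
    unfolding bounded_pos by blast
  define \<epsilon> where "\<epsilon> = min (r / M) (1 / (2 * M))"
  have \<epsilon>: "\<epsilon> > 0" "\<epsilon> * M \<le> r" "\<epsilon> * M \<le> 1 / 2"
  proof -
    have "\<epsilon> * M \<le> r / M * M" "\<epsilon> * M \<le> 1 / (2 * M) * M"
      unfolding \<epsilon>_def using M(1) by (intro mult_right_mono; simp)+
    then show "\<epsilon> > 0" "\<epsilon> * M \<le> r" "\<epsilon> * M \<le> 1 / 2"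
      unfolding \<epsilon>_def using r(1) M(1) by auto
  qed
  have small: "cmod (of_real \<epsilon> * w) \<le> \<epsilon> * M" if "norm w \<le> M" for w
    using that \<epsilon>(1) by (simp add: norm_mult mult_left_mono)
  show ?thesis
  proof (rule that[OF r(1) \<epsilon>(1)])
    show "poly D z \<noteq> 0" if "z \<in> cball 0 r" for z using that r(2) by blast
    show "cmod (of_real \<epsilon> * (poly P z / poly D z)) \<le> r" if "z \<in> cball 0 r" for z
      using small[of "R z"] M(2)[of "R z"] that \<epsilon>(2) unfolding R_def by auto
    show "cmod (of_real \<epsilon> * ((poly (pderiv P) z * poly D z - poly P z * poly (pderiv D) z) / (poly D z)\<^sup>2))
       \<le> 1 / 2" if "z \<in> cball 0 r" for z
      using small[of "R' z"] M(2)[of "R' z"] that \<epsilon>(3) unfolding R'_def by auto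
    show "cmod (of_real \<epsilon> * w) \<le> r" if "w \<in> Z" for w
      using small[of w] M(2)[of w] that \<epsilon>(2) by auto
  qed
qed

lemma funpow_in_affine_chart:
  assumes Hf: "form_map d H" and TS: "T ` S \<subseteq> S"
    and HT: "\<And>z. z \<in> S \<Longrightarrow> \<exists>m. m \<noteq> 0 \<and> H (vector [1, z]) = m *s vector [1, T z]"
    and z: "z \<in> S"
  shows "\<exists>m. m \<noteq> 0 \<and> (H ^^ k) (vector [1, z]) = m *s vector [1, (T ^^ k) z]"
proof (induction k)
  case (Suc k)
  then obtain m where m: "m \<noteq> 0" "(H ^^ k) (vector [1, z]) = m *s vector [1, (T ^^ k) z]" by blast
  have "(T ^^ k) z \<in> S" using z TS by (induction k) auto
  then obtain m' where m': "m' \<noteq> 0" "H (vector [1, (T ^^ k) z]) = m' *s vector [1, (T ^^ Suc k) z]"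
    using HT by auto
  have "(H ^^ Suc k) (vector [1, z]) = (m ^ d * m') *s vector [1, (T ^^ Suc k) z]"
    using m(2) m'(2) by (simp add: form_map_homogeneous[OF Hf])
  then show ?case using m(1) m'(1) by (intro exI[of _ "m ^ d * m'"]) simp
qed (intro exI[of _ 1], simp)

lemma attracting_fixed_point_in_chart:
  assumes Hf: "form_map d H" and HDQ: "\<And>z. H (vector [1, z]) = vector [poly D z, poly Q z]"
    and D: "poly D zs \<noteq> 0" and fixed: "poly Q zs = zs * poly D zs"
    and contr: "cmod ((poly (pderiv Q) zs * poly D zs - poly Q zs * poly (pderiv D) zs) / (poly D zs)\<^sup>2) < 1"
  shows "attracting_periodic H (vector [1, zs]) 1"
  unfolding attracting_periodic_def
proof (intro conjI exI allI impI)
  let ?q = "vector [1, zs] :: complex^2"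
  show "?q \<noteq> 0" by (rule vector_chart_nonzero)
  show "(H ^^ 1) ?q = poly D zs *s ?q" using fixed by (simp add: HDQ vec_eq_iff forall_2)
  fix w assume w: "det2 ?q w \<noteq> 0"
  have "poly (pderiv Q) zs * poly D zs - poly Q zs * poly (pderiv D) zs
        = poly D zs * (poly (pderiv Q) zs - zs * poly (pderiv D) zs)"
    unfolding fixed by (simp add: algebra_simps)
  then have "cmod (poly (pderiv Q) zs - zs * poly (pderiv D) zs) < cmod (poly D zs)"
    using contr D by (simp add: power2_eq_square norm_divide norm_mult divide_less_eq)
  then have "cmod (poly (pderiv Q) zs - zs * poly (pderiv D) zs) * cmod (det2 ?q w)
        < cmod (poly D zs) * cmod (det2 ?q w)"
    using w by (intro mult_strict_right_mono) auto
  then show "cmod (det2 ?q (dirderiv (H ^^ 1) ?q w)) < cmod (poly D zs * det2 ?q w)"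
    using det2_dirderiv_at_chart_fixed_point[OF Hf HDQ fixed] by (simp add: norm_mult)
qed simp

lemma poly_quotient_lipschitz_on_cball:
  assumes D: "\<And>z. z \<in> cball 0 r \<Longrightarrow> poly D z \<noteq> 0"
    and deriv: "\<And>z. z \<in> cball 0 r \<Longrightarrow>
       cmod ((poly (pderiv Q) z * poly D z - poly Q z * poly (pderiv D) z) / (poly D z)\<^sup>2) \<le> 1 / 2"
    and xy: "x \<in> cball 0 r" "y \<in> cball 0 r"
  shows "cmod (poly Q x / poly D x - poly Q y / poly D y) \<le> 1 / 2 * cmod (x - y)"
proof (rule field_differentiable_bound[OF convex_cball _ _ xy])
  show "((\<lambda>z. poly Q z / poly D z) has_field_derivative
          (poly (pderiv Q) z * poly D z - poly Q z * poly (pderiv D) z) / (poly D z)\<^sup>2)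
        (at z within cball 0 r)" if "z \<in> cball 0 r" for z
    unfolding power2_eq_square
    by (rule has_field_derivative_at_within, rule DERIV_divide[OF poly_DERIV poly_DERIV D[OF that]])
qed (use deriv in blast)

lemma hyperbolic_fixed_of_chart_contraction:
  assumes Hf: "form_map d H" and HDQ: "\<And>z. H (vector [1, z]) = vector [poly D z, poly Q z]"
    and r: "0 \<le> r"
    and D: "\<And>z. z \<in> cball 0 r \<Longrightarrow> poly D z \<noteq> 0"
    and maps: "\<And>z. z \<in> cball 0 r \<Longrightarrow> cmod (poly Q z / poly D z) \<le> r"
    and deriv: "\<And>z. z \<in> cball 0 r \<Longrightarrow>
       cmod ((poly (pderiv Q) z * poly D z - poly Q z * poly (pderiv D) z) / (poly D z)\<^sup>2) \<le> 1 / 2"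
    and crit: "\<And>c. critical_pt H c \<Longrightarrow> \<exists>m z. m \<noteq> 0 \<and> z \<in> cball 0 r \<and> H c = m *s vector [1, z]"
  shows "hyperbolic_fixed H"
proof -
  define T where "T z = poly Q z / poly D z" for z
  have TS: "T ` cball 0 r \<subseteq> cball 0 r" using maps by (auto simp: T_def)
  obtain zs where zs: "zs \<in> cball 0 r" "T zs = zs"
    and conv: "\<And>z k. z \<in> cball 0 r \<Longrightarrow> dist ((T ^^ k) z) zs \<le> (1 / 2) ^ k * dist z zs"
    using contraction_fixed_point_geometric[of "cball 0 r" "1 / 2" T] r TS
      poly_quotient_lipschitz_on_cball[OF D deriv]
    by (auto simp: complete_eq_closed dist_norm T_def)
  have fixed: "poly Q zs = zs * poly D zs" using zs D[OF zs(1)] by (simp add: T_def field_simps)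
  have att: "attracting_periodic H (vector [1, zs]) 1"
    using deriv[OF zs(1)] by (intro attracting_fixed_point_in_chart[OF Hf HDQ D[OF zs(1)] fixed]) simp
  have HT: "\<exists>m. m \<noteq> 0 \<and> H (vector [1, z]) = m *s vector [1, T z]" if "z \<in> cball 0 r" for z
    using D[OF that] by (intro exI[of _ "poly D z"]) (simp add: HDQ T_def vec_eq_iff forall_2)
  show ?thesis
    unfolding hyperbolic_fixed_def
  proof (intro allI impI exI)
    fix c assume "critical_pt H c"
    then obtain m z where m: "m \<noteq> 0" and z: "z \<in> cball 0 r" and Hc: "H c = m *s vector [1, z]"
      using crit by blast
    have "pdist ((H ^^ Suc k) c) (vector [1, zs]) \<le> (1 / 2) ^ k * cmod (z - zs)" for k
    proof -
      obtain m' where m': "m' \<noteq> 0" "(H ^^ k) (vector [1, z]) = m' *s vector [1, (T ^^ k) z]"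
        using funpow_in_affine_chart[OF Hf TS HT z] by blast
      have "(H ^^ Suc k) c = (m ^ (d ^ k) * m') *s vector [1, (T ^^ k) z]"
        by (simp only: funpow_Suc_right comp_def Hc form_map_funpow_homogeneous[OF Hf] m'(2))
          simp
      then have "pdist ((H ^^ Suc k) c) (vector [1, zs]) = pdist (vector [1, (T ^^ k) z]) (vector [1, zs])"
        using m m' by (simp add: pdist_scale_left)
      also have "\<dots> \<le> cmod ((T ^^ k) z - zs)" by (rule pdist_affine_chart_le)
      also have "\<dots> \<le> (1 / 2) ^ k * cmod (z - zs)" using conv[OF z] by (simp add: dist_norm)
      finally show ?thesis .
    qed
    then have "\<forall>\<^sub>F k in sequentially.
        norm (pdist ((H ^^ Suc k) c) (vector [1, zs])) \<le> (1 / 2) ^ k * cmod (z - zs)"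
      by (simp add: pdist_nonneg always_eventually)
    then have "(\<lambda>k. pdist ((H ^^ Suc k) c) (vector [1, zs])) \<longlonglongrightarrow> 0"
      by (rule Lim_null_comparison) (intro tendsto_mult_left_zero LIMSEQ_power_zero; simp)
    then show "in_attr_basin H (vector [1, zs]) 1 c"
      using att unfolding in_attr_basin_def by (simp add: LIMSEQ_imp_Suc)
  qed
qed

lemma hyperbolic_fixed_constant:
  assumes g: "\<And>v. g v = K" and K: "K \<noteq> 0"
  shows "hyperbolic_fixed g"
  unfolding hyperbolic_fixed_def
proof (intro allI impI exI)
  fix c
  have "attracting_periodic g K 1"
    unfolding attracting_periodic_def
  proof (intro conjI exI[of _ 1] allI impI)
    fix w assume w: "det2 K w \<noteq> 0"
    have "dirderiv (g ^^ 1) K w = 0" unfolding dirderiv_def by (simp add: g vec_eq_iff)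
    then show "cmod (det2 K (dirderiv (g ^^ 1) K w)) < cmod (1 * det2 K w)"
      using w by (simp add: det2_def)
  qed (simp_all add: g K)
  moreover have "(\<lambda>k. pdist ((g ^^ (Suc k * 1)) c) K) \<longlonglongrightarrow> 0"
    by (simp add: g pdist_def det2_def)
  ultimately show "in_attr_basin g K 1 c"
    unfolding in_attr_basin_def by (simp add: LIMSEQ_imp_Suc)
qed

lemma form_map_degree_0_constant:
  assumes "form_map 0 g"
  shows "g v = g w"
proof -
  have "g v $ k = g w $ k" for k
  proof -
    obtain c where "\<And>v. g v $ k = hpoly2 0 c v"
      using assms unfolding form_map_def binary_form_def by blast
    then show ?thesis by (simp add: hpoly2_def)
  qed
  then show ?thesis by (simp add: vec_eq_iff)
qed

lemma hyperbolic_fixed_shear_scale: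
  fixes s :: complex and r \<epsilon> :: real
  defines "A \<equiv> vector [vector [1, s], vector [0, of_real \<epsilon>]] :: complex^2^2"
  assumes gf: "form_map d g"
    and p2: "\<And>z. poly p2 z = g (vector [1, z]) $ 2"
    and D: "\<And>z. poly D z = g (vector [1, z]) $ 1 + s * g (vector [1, z]) $ 2"
    and r: "r \<ge> 0" and \<epsilon>: "\<epsilon> \<noteq> 0"
    and D_nz: "\<And>z. z \<in> cball 0 r \<Longrightarrow> poly D z \<noteq> 0"
    and maps: "\<And>z. z \<in> cball 0 r \<Longrightarrow> cmod (of_real \<epsilon> * (poly p2 z / poly D z)) \<le> r"
    and deriv: "\<And>z. z \<in> cball 0 r \<Longrightarrow> cmod (of_real \<epsilon> *
        ((poly (pderiv p2) z * poly D z - poly p2 z * poly (pderiv D) z) / (poly D z)\<^sup>2)) \<le> 1 / 2"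
    and crit: "\<And>c. critical_pt g c \<Longrightarrow> \<exists>m x. m \<noteq> 0 \<and> c = m *s x \<and> g x $ 1 + s * g x $ 2 \<noteq> 0
                 \<and> cmod (of_real \<epsilon> * (g x $ 2 / (g x $ 1 + s * g x $ 2))) \<le> r"
  shows "invertible A" "hyperbolic_fixed (\<lambda>v. A *v g v)"
proof -
  have A: "A *v y = vector [y$1 + s * y$2, of_real \<epsilon> * y$2]" for y
    unfolding A_def by (simp add: vec_eq_iff forall_2 matrix_vector_mult_2cols)
  show "invertible A"
    unfolding invertible_det_nz det_2 using \<epsilon> by (simp add: A_def)
  define Q where "Q = smult (of_real \<epsilon>) p2"
  show "hyperbolic_fixed (\<lambda>v. A *v g v)"
  proof (rule hyperbolic_fixed_of_chart_contraction[OF form_map_matrix_mult[OF gf] _ r D_nz])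
    show "A *v g (vector [1, z]) = vector [poly D z, poly Q z]" for z
      by (simp add: A D Q_def p2)
    show "cmod (poly Q z / poly D z) \<le> r" if "z \<in> cball 0 r" for z
      using maps[OF that] by (simp add: Q_def)
    show "cmod ((poly (pderiv Q) z * poly D z - poly Q z * poly (pderiv D) z) / (poly D z)\<^sup>2) \<le> 1 / 2"
      if "z \<in> cball 0 r" for z
      using deriv[OF that] by (simp add: Q_def pderiv_smult right_diff_distrib mult.assoc)
    fix c assume "critical_pt (\<lambda>v. A *v g v) c"
    then have "critical_pt g c"
      by (rule critical_pt_matrix_mult[OF gf \<open>invertible A\<close>])
    then obtain m x where m: "m \<noteq> 0" and c: "c = m *s x" and Dx: "g x $ 1 + s * g x $ 2 \<noteq> 0"
      and z: "cmod (of_real \<epsilon> * (g x $ 2 / (g x $ 1 + s * g x $ 2))) \<le> r"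
      using crit by blast
    have "A *v g c = m ^ d *s vector [g x $ 1 + s * g x $ 2, of_real \<epsilon> * g x $ 2]"
      by (simp add: c form_map_homogeneous[OF gf] vector_scalar_commute A)
    also have "\<dots> = (m ^ d * (g x $ 1 + s * g x $ 2)) *s
        vector [1, of_real \<epsilon> * (g x $ 2 / (g x $ 1 + s * g x $ 2))]"
      using Dx by (simp add: vec_eq_iff forall_2)
    finally show "\<exists>m z. m \<noteq> 0 \<and> z \<in> cball 0 r \<and> A *v g c = m *s vector [1, z]"
      using m Dx z by (intro exI conjI) auto
  qed
qed

lemma exists_matrix_hyperbolic_fixed:
  assumes gf: "form_map d g" and nz: "\<And>v. v \<noteq> 0 \<Longrightarrow> g v \<noteq> 0"
  obtains A :: "complex^2^2" where "invertible A" "hyperbolic_fixed (\<lambda>v. A *v g v)"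
proof (cases "d = 0")
  case True
  have "hyperbolic_fixed g"
    using form_map_degree_0_constant[OF gf[unfolded True]] nz[OF vector_chart_nonzero(2)]
    by (intro hyperbolic_fixed_constant) blast+
  then show ?thesis using that[of "mat 1"] by (simp add: invertible_def)
next
  case False
  then have d1: "d \<ge> 1" by simp
  obtain X where X: "finite X" "0 \<notin> X"
    and crit: "\<And>c. critical_pt g c \<Longrightarrow> \<exists>m x. m \<noteq> 0 \<and> x \<in> X \<and> c = m *s x"
    using critical_pts_finite_representatives[OF gf d1 nz] by blast
  have fin: "finite (insert (vector [1, 0]) X)" using X(1) by simp
  have g_nz: "g x \<noteq> 0" if x: "x \<in> insert (vector [1, 0]) X" for x
  proof (rule nz)
    show "x \<noteq> 0" using x X(2) vector_chart_nonzero(1)[of 0] by force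
  qed
  obtain s where s: "\<And>x. x \<in> insert (vector [1, 0]) X \<Longrightarrow> g x $ 1 + s * g x $ 2 \<noteq> 0"
    using exists_nonvanishing_combination[where g = g, OF fin g_nz] by blast
  obtain p1 where p1: "\<And>z. poly p1 z = g (vector [1, z]) $ 1"
    using binary_form_dehomogenize[of d "\<lambda>v. g v $ 1"] gf unfolding form_map_def by blast
  obtain p2 where p2: "\<And>z. poly p2 z = g (vector [1, z]) $ 2"
    using binary_form_dehomogenize[of d "\<lambda>v. g v $ 2"] gf unfolding form_map_def by blast
  define D where "D = p1 + smult s p2"
  have D: "poly D z = g (vector [1, z]) $ 1 + s * g (vector [1, z]) $ 2" for z
    unfolding D_def by (simp add: p1 p2)
  have D0: "poly D 0 \<noteq> 0" using s[of "vector [1, 0]"] by (simp add: D)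
  define Z where "Z = (\<lambda>x. g x $ 2 / (g x $ 1 + s * g x $ 2)) ` X"
  have "finite Z" unfolding Z_def using X(1) by simp
  obtain r \<epsilon> where r: "r > 0" and \<epsilon>: "\<epsilon> > 0"
    and D_nz: "\<And>z. z \<in> cball 0 r \<Longrightarrow> poly D z \<noteq> 0"
    and maps: "\<And>z. z \<in> cball 0 r \<Longrightarrow> cmod (of_real \<epsilon> * (poly p2 z / poly D z)) \<le> r"
    and deriv: "\<And>z. z \<in> cball 0 r \<Longrightarrow> cmod (of_real \<epsilon> *
        ((poly (pderiv p2) z * poly D z - poly p2 z * poly (pderiv D) z) / (poly D z)\<^sup>2)) \<le> 1 / 2"
    and crit_vals: "\<And>w. w \<in> Z \<Longrightarrow> cmod (of_real \<epsilon> * w) \<le> r"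
    using small_multiple_contracts_on_disc[OF D0 \<open>finite Z\<close>, where P = p2] by metis
  have "\<exists>m x. m \<noteq> 0 \<and> c = m *s x \<and> g x $ 1 + s * g x $ 2 \<noteq> 0
          \<and> cmod (of_real \<epsilon> * (g x $ 2 / (g x $ 1 + s * g x $ 2))) \<le> r" if "critical_pt g c" for c
    using crit[OF that] s crit_vals unfolding Z_def by blast
  from hyperbolic_fixed_shear_scale[OF gf p2 D _ _ D_nz maps deriv this] r \<epsilon>
  show ?thesis using that by simp
qed

lemma lin3_eq: "lin3 b x = b$1 * x$1 + b$2 * x$2 + b$3 * x$3"
  unfolding lin3_def by (simp add: sum_3)

definition complementary_pair :: "complex^3 \<Rightarrow> complex^3 \<Rightarrow> complex^3 \<Rightarrow> bool" where
  "complementary_pair p b1 b2 \<longleftrightarrow>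
     (\<forall>x. (lin3 b1 x = 0 \<and> lin3 b2 x = 0) \<longleftrightarrow> (\<exists>c. x = c *s p)) \<and>
     (\<forall>y1 y2. \<exists>x. lin3 b1 x = y1 \<and> lin3 b2 x = y2) \<and>
     {w. lin3 p w = 0} = {s *s b1 + t *s b2 | s t. True} \<and>
     (\<forall>s t. s *s b1 + t *s b2 = 0 \<longrightarrow> s = 0 \<and> t = 0)"

lemma complementary_pairI:
  fixes p b1 b2 :: "complex^3"
  assumes k: "p$k \<noteq> 0"
    and ker: "\<And>x. lin3 b1 x = 0 \<and> lin3 b2 x = 0 \<Longrightarrow> x = (x$k / p$k) *s p"
    and kerc: "lin3 b1 p = 0" "lin3 b2 p = 0"
    and surj: "\<And>y1 y2. \<exists>x. lin3 b1 x = y1 \<and> lin3 b2 x = y2"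
    and span: "\<And>w. lin3 p w = 0 \<Longrightarrow> \<exists>s t. w = s *s b1 + t *s b2"
    and inpl: "lin3 p b1 = 0" "lin3 p b2 = 0"
    and ind: "\<And>s t. s *s b1 + t *s b2 = 0 \<Longrightarrow> s = 0 \<and> t = 0"
  shows "complementary_pair p b1 b2"
  unfolding complementary_pair_def
proof (intro conjI allI impI)
  fix x
  show "(lin3 b1 x = 0 \<and> lin3 b2 x = 0) \<longleftrightarrow> (\<exists>c. x = c *s p)"
  proof
    assume "lin3 b1 x = 0 \<and> lin3 b2 x = 0" then show "\<exists>c. x = c *s p" using ker by blast
  next
    assume "\<exists>c. x = c *s p"
    then obtain c where "x = c *s p" by blast
    then have "lin3 b1 x = c * lin3 b1 p" "lin3 b2 x = c * lin3 b2 p" unfolding lin3_eq by (simp_all add: algebra_simps)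
    then show "lin3 b1 x = 0 \<and> lin3 b2 x = 0" using kerc by simp
  qed
next
  show "{w. lin3 p w = 0} = {s *s b1 + t *s b2 | s t. True}"
  proof (intro set_eqI iffI)
    fix w assume "w \<in> {w. lin3 p w = 0}" then show "w \<in> {s *s b1 + t *s b2 | s t. True}" using span by auto
  next
    fix w assume "w \<in> {s *s b1 + t *s b2 | s t. True}"
    then obtain s t where "w = s *s b1 + t *s b2" by blast
    then have "lin3 p w = s * lin3 p b1 + t * lin3 p b2" unfolding lin3_eq by (simp add: algebra_simps)
    then show "w \<in> {w. lin3 p w = 0}" using inpl by simp
  qed
qed (use surj ind in auto)

lemma exists_complementary_pair:
  fixes p :: "complex^3"
  assumes p0: "p \<noteq> 0"
  shows "\<exists>b1 b2. complementary_pair p b1 b2"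
proof -
  consider "p$3 \<noteq> 0" | "p$2 \<noteq> 0" | "p$1 \<noteq> 0" using p0 by (auto simp: vec_eq_iff forall_3)
  then show ?thesis
  proof cases
    case 1
    show ?thesis
    proof (rule exI, rule exI, rule complementary_pairI[OF 1])
      fix x :: "complex^3"
      assume "lin3 (vector [p$3, 0, - p$1]) x = 0 \<and> lin3 (vector [0, p$3, - p$2]) x = 0"
      then show "x = (x$3 / p$3) *s p" using 1 unfolding lin3_eq
        by (simp add: vec_eq_iff forall_3 field_simps; simp add: algebra_simps)
    next
      fix y1 y2 :: complex
      show "\<exists>x. lin3 (vector [p$3, 0, - p$1]) x = y1 \<and> lin3 (vector [0, p$3, - p$2]) x = y2"
        using 1 by (intro exI[of _ "vector [y1 / p$3, y2 / p$3, 0]"]) (simp add: lin3_eq)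
    next
      fix w :: "complex^3" assume "lin3 p w = 0"
      then have "w = (w$1 / p$3) *s vector [p$3, 0, - p$1] + (w$2 / p$3) *s vector [0, p$3, - p$2]"
        using 1 unfolding lin3_eq
        by (auto simp: vec_eq_iff forall_3 field_simps; algebra)
      then show "\<exists>s t. w = s *s vector [p$3, 0, - p$1] + t *s vector [0, p$3, - p$2]" by blast
    next
      fix s t :: complex assume "s *s vector [p$3, 0, - p$1] + t *s vector [0, p$3, - p$2] = (0::complex^3)"
      then show "s = 0 \<and> t = 0" using 1 by (auto simp: vec_eq_iff forall_3 dest: spec[of _ 1] spec[of _ 2])
    qed (simp_all add: lin3_eq algebra_simps)
  next
    case 2
    show ?thesis
    proof (rule exI, rule exI, rule complementary_pairI[OF 2])
      fix x :: "complex^3"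
      assume "lin3 (vector [p$2, - p$1, 0]) x = 0 \<and> lin3 (vector [0, - p$3, p$2]) x = 0"
      then show "x = (x$2 / p$2) *s p" using 2 unfolding lin3_eq
        by (simp add: vec_eq_iff forall_3 field_simps; simp add: algebra_simps)
    next
      fix y1 y2 :: complex
      show "\<exists>x. lin3 (vector [p$2, - p$1, 0]) x = y1 \<and> lin3 (vector [0, - p$3, p$2]) x = y2"
        using 2 by (intro exI[of _ "vector [y1 / p$2, 0, y2 / p$2]"]) (simp add: lin3_eq)
    next
      fix w :: "complex^3" assume "lin3 p w = 0"
      then have "w = (w$1 / p$2) *s vector [p$2, - p$1, 0] + (w$3 / p$2) *s vector [0, - p$3, p$2]"
        using 2 unfolding lin3_eq
        by (auto simp: vec_eq_iff forall_3 field_simps; algebra)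
      then show "\<exists>s t. w = s *s vector [p$2, - p$1, 0] + t *s vector [0, - p$3, p$2]" by blast
    next
      fix s t :: complex assume "s *s vector [p$2, - p$1, 0] + t *s vector [0, - p$3, p$2] = (0::complex^3)"
      then show "s = 0 \<and> t = 0" using 2 by (auto simp: vec_eq_iff forall_3 dest: spec[of _ 1] spec[of _ 3])
    qed (simp_all add: lin3_eq algebra_simps)
  next
    case 3
    show ?thesis
    proof (rule exI, rule exI, rule complementary_pairI[OF 3])
      fix x :: "complex^3"
      assume "lin3 (vector [- p$2, p$1, 0]) x = 0 \<and> lin3 (vector [- p$3, 0, p$1]) x = 0"
      then show "x = (x$1 / p$1) *s p" using 3 unfolding lin3_eq
        by (simp add: vec_eq_iff forall_3 field_simps; simp add: algebra_simps)
    next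
      fix y1 y2 :: complex
      show "\<exists>x. lin3 (vector [- p$2, p$1, 0]) x = y1 \<and> lin3 (vector [- p$3, 0, p$1]) x = y2"
        using 3 by (intro exI[of _ "vector [0, y1 / p$1, y2 / p$1]"]) (simp add: lin3_eq)
    next
      fix w :: "complex^3" assume "lin3 p w = 0"
      then have "w = (w$2 / p$1) *s vector [- p$2, p$1, 0] + (w$3 / p$1) *s vector [- p$3, 0, p$1]"
        using 3 unfolding lin3_eq
        by (auto simp: vec_eq_iff forall_3 field_simps; algebra)
      then show "\<exists>s t. w = s *s vector [- p$2, p$1, 0] + t *s vector [- p$3, 0, p$1]" by blast
    next
      fix s t :: complex assume "s *s vector [- p$2, p$1, 0] + t *s vector [- p$3, 0, p$1] = (0::complex^3)"
      then show "s = 0 \<and> t = 0" using 3 by (auto simp: vec_eq_iff forall_3 dest: spec[of _ 2] spec[of _ 3])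
    qed (simp_all add: lin3_eq algebra_simps)
  qed
qed

lemma exists_matrix_kernel_line:
  assumes "p \<noteq> 0"
  obtains \<Lambda> :: "complex^3^2" where "{x. \<Lambda> *v x = 0} = {c *s p | c. True}" "surj ((*v) \<Lambda>)"
proof -
  obtain l1 l2 where l: "complementary_pair p l1 l2"
    using exists_complementary_pair[OF assms] by blast
  define \<Lambda> :: "complex^3^2" where "\<Lambda> = vector [l1, l2]"
  have \<Lambda>: "\<Lambda> *v x = vector [lin3 l1 x, lin3 l2 x]" for x
    unfolding \<Lambda>_def by (simp add: vec_eq_iff forall_2 matrix_vector_mult_def lin3_def)
  show ?thesis
  proof (rule that)
    have "\<Lambda> *v x = 0 \<longleftrightarrow> lin3 l1 x = 0 \<and> lin3 l2 x = 0" for x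
      unfolding \<Lambda> by (simp add: vec_eq_iff forall_2)
    then show "{x. \<Lambda> *v x = 0} = {c *s p | c. True}"
      using l unfolding complementary_pair_def by simp
    show "surj ((*v) \<Lambda>)"
    proof (rule surjI)
      fix y :: "complex^2"
      show "\<Lambda> *v (SOME x. lin3 l1 x = y$1 \<and> lin3 l2 x = y$2) = y"
        using someI_ex[of "\<lambda>x. lin3 l1 x = y$1 \<and> lin3 l2 x = y$2"] l
        unfolding complementary_pair_def \<Lambda> by (simp add: vec_eq_iff forall_2)
    qed
  qed
qed

lemma exists_matrix_range_plane:
  assumes "a \<noteq> 0"
  obtains B :: "complex^2^3" where "inj ((*v) B)" "range ((*v) B) = {w. lin3 a w = 0}"
proof -
  obtain b1 b2 where b: "complementary_pair a b1 b2"
    using exists_complementary_pair[OF assms] by blast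
  define B :: "complex^2^3" where "B = transpose (vector [b1, b2])"
  have B: "B *v v = v$1 *s b1 + v$2 *s b2" for v
    unfolding B_def by (simp add: vec_eq_iff matrix_vector_mult_2cols transpose_def mult.commute)
  show ?thesis
  proof (rule that)
    have indep: "\<And>s t. s *s b1 + t *s b2 = 0 \<Longrightarrow> s = 0 \<and> t = 0"
      and plane: "{w. lin3 a w = 0} = {s *s b1 + t *s b2 | s t. True}"
      using b unfolding complementary_pair_def by simp_all
    show "inj ((*v) B)"
      unfolding vec.inj_iff_eq_0
    proof (intro allI impI)
      fix v assume "B *v v = 0"
      then have "v$1 = 0 \<and> v$2 = 0" using indep[of "v$1" "v$2"] by (simp add: B)
      then show "v = 0" by (simp add: vec_eq_iff forall_2)
    qed
    show "range ((*v) B) = {w. lin3 a w = 0}"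
      unfolding plane
    proof (intro set_eqI iffI)
      fix w assume "w \<in> range ((*v) B)"
      then obtain v where "w = B *v v" by (rule rangeE)
      then show "w \<in> {s *s b1 + t *s b2 | s t. True}" unfolding B by blast
    next
      fix w assume "w \<in> {s *s b1 + t *s b2 | s t. True}"
      then obtain s t where "w = s *s b1 + t *s b2" by blast
      then have "w = B *v vector [s, t]" by (simp add: B)
      then show "w \<in> range ((*v) B)" by (rule range_eqI)
    qed
  qed
qed

section \<open>Restricting \<open>f\<close> to the line \<open>L\<^sub>0\<close>\<close>

lemma form_map_restrict_to_plane:
  "form_map d (\<lambda>v. (\<Lambda> :: complex^3^2) *v Fv d Fc ((B :: complex^2^3) *v v))"
  unfolding form_map_def
proof
  fix k
  have "binary_form d (\<lambda>v. \<Sum>j\<in>UNIV. \<Lambda>$k$j * hpoly3 d (Fc j) (B *v v))"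
    by (intro binary_form_sum binary_form_cmult hpoly3_comp_matrix) simp
  then show "binary_form d (\<lambda>v. (\<Lambda> *v Fv d Fc (B *v v)) $ k)"
    by (simp add: matrix_vector_mult_def Fv_def)
qed

lemma scaled_value_mem_fimage:
  assumes "v \<in> V" "v \<noteq> 0" "v \<notin> indet d Fc" "c \<noteq> 0"
  shows "c *s Fv d Fc v \<in> fimage d Fc V"
proof -
  have "Fv d Fc v \<noteq> 0" using assms(2,3) unfolding indet_def by blast
  then show ?thesis
    unfolding fimage_def zclosure_def using assms by (intro CollectI conjI allI impI) auto
qed

lemma restriction_nonvanishing:
  fixes \<Lambda> :: "complex^3^2" and B :: "complex^2^3"
  assumes ker: "{x. \<Lambda> *v x = 0} = {c *s p0 | c. True}"
    and B_inj: "inj ((*v) B)" and B_range: "range ((*v) B) = {w. lin3 a w = 0}"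
    and disj: "pline a \<inter> indet d Fc = {}" and p0: "p0 \<notin> fimage d Fc (pline a)"
    and v: "v \<noteq> 0"
  shows "\<Lambda> *v Fv d Fc (B *v v) \<noteq> 0"
proof
  assume "\<Lambda> *v Fv d Fc (B *v v) = 0"
  then obtain c where c: "Fv d Fc (B *v v) = c *s p0" using ker by blast
  have "B *v v \<noteq> 0" using v B_inj unfolding vec.inj_iff_eq_0 by blast
  then have x: "B *v v \<in> pline a" "B *v v \<noteq> 0" "B *v v \<notin> indet d Fc"
    using B_range disj unfolding pline_def by auto
  show False
  proof (cases "c = 0")
    case True
    then show False using x c unfolding indet_def by simp
  next
    case False
    have "(1 / c) *s Fv d Fc (B *v v) \<in> fimage d Fc (pline a)"
      using False by (intro scaled_value_mem_fimage x) simp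
    then show False using p0 c False by simp
  qed
qed

lemma kernel_matrix_triple:
  fixes B :: "complex^2^3" and A :: "complex^2^2" and \<Lambda> :: "complex^3^2"
  assumes "inj ((*v) B)" "invertible A"
  shows "{x. (B ** A ** \<Lambda>) *v x = 0} = {x. \<Lambda> *v x = 0}"
proof -
  have "B *v (A *v y) = 0 \<longleftrightarrow> y = 0" for y
    using assms invertible_matrix_vector_eq_0[of A y] vec.inj_iff_eq_0[of B]
    by (metis matrix_vector_mult_0_right)
  then show ?thesis by (simp add: matrix_vector_mul_assoc[symmetric])
qed

lemma range_matrix_triple:
  fixes B :: "complex^2^3" and A :: "complex^2^2" and \<Lambda> :: "complex^3^2"
  assumes "invertible A" "surj ((*v) \<Lambda>)"
  shows "range ((*v) (B ** A ** \<Lambda>)) = range ((*v) B)"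
proof -
  have "surj ((*v) (A ** \<Lambda>))"
    unfolding surj_def
  proof
    fix y :: "complex^2"
    obtain z where "A *v z = y" using invertible_surj_matrix_vector[OF assms(1)] .
    moreover obtain x where "\<Lambda> *v x = z" using assms(2) by (metis surjD)
    ultimately show "\<exists>x. y = (A ** \<Lambda>) *v x" by (metis matrix_vector_mul_assoc)
  qed
  moreover have "(*v) (B ** A ** \<Lambda>) = (*v) B \<circ> (*v) (A ** \<Lambda>)"
    by (simp add: fun_eq_iff matrix_vector_mul_assoc matrix_mul_assoc)
  ultimately show ?thesis by (metis image_comp)
qed

lemma plane_coordinates_conj:
  fixes B :: "complex^2^3" and K :: "complex^3 \<Rightarrow> complex^2"
  assumes B: "inj ((*v) B)" and span: "range ((*v) B) = {s *s u1 + t *s u2 | s t. True}"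
    and indep: "\<forall>s t. s *s u1 + t *s u2 = 0 \<longrightarrow> s = 0 \<and> t = 0"
    and G: "\<forall>v. (G v $ 1) *s u1 + (G v $ 2) *s u2 = B *v K ((v $ 1) *s u1 + (v $ 2) *s u2)"
  obtains C :: "complex^2^2" where "invertible C" "\<And>v. C *v G v = K (B *v (C *v v))"
proof -
  have "u1 \<in> range ((*v) B)" "u2 \<in> range ((*v) B)"
    unfolding span by (intro CollectI exI[of _ 1] exI[of _ 0] exI[of _ 1]; simp)+
  then obtain c1 c2 where c: "u1 = B *v c1" "u2 = B *v c2" by (elim rangeE)
  define C :: "complex^2^2" where "C = transpose (vector [c1, c2])"
  have BC: "B *v (C *v v) = (v $ 1) *s u1 + (v $ 2) *s u2" for v
  proof -
    have "C *v v = (v $ 1) *s c1 + (v $ 2) *s c2"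
      unfolding C_def by (simp add: vec_eq_iff matrix_vector_mult_2cols transpose_def mult.commute)
    then show ?thesis by (simp add: matrix_vector_right_distrib vector_scalar_commute c(1,2)[symmetric])
  qed
  have "inj ((*v) C)"
    unfolding vec.inj_iff_eq_0
  proof (intro allI impI)
    fix v assume "C *v v = 0"
    then have "v $ 1 = 0 \<and> v $ 2 = 0" using indep BC[of v] by simp
    then show "v = 0" by (simp add: vec_eq_iff forall_2)
  qed
  then have "invertible C"
    unfolding invertible_left_inverse matrix_left_invertible_injective .
  moreover have "C *v G v = K (B *v (C *v v))" for v
  proof (rule injD[OF B])
    show "B *v (C *v G v) = B *v K (B *v (C *v v))" unfolding BC using G by blast
  qed
  ultimately show ?thesis using that by blast
qed

lemma rat_map_hyperbolic_conj:
  assumes C: "invertible C" and Hf: "form_map d H" and H_nz: "\<And>v. v \<noteq> 0 \<Longrightarrow> H v \<noteq> 0"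
    and H_hyp: "hyperbolic_fixed H" and conj: "\<And>v. C *v G v = H (C *v v)"
  shows "rat_map_P1 d G \<and> hyperbolic G"
proof -
  obtain C' where C': "C' ** C = mat 1" using C unfolding invertible_def by blast
  have "G v = C' *v H (C *v v)" for v
  proof -
    have "C' *v (C *v G v) = G v" using C' by (simp add: matrix_vector_mul_assoc)
    then show ?thesis by (simp add: conj)
  qed
  then have "G = (\<lambda>v. C' *v H (C *v v))" by (rule ext)
  then have Gf: "form_map d G"
    using form_map_matrix_mult[OF form_map_comp_matrix[OF Hf]] by simp
  have "G v \<noteq> 0" if "v \<noteq> 0" for v
  proof
    assume "G v = 0"
    then have "H (C *v v) = 0" by (simp flip: conj)
    then show False using H_nz that invertible_matrix_vector_eq_0[OF C] by blast
  qed
  then show ?thesis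
    using hyperbolic_fixed_conj_matrix[of C d G H, OF C Gf conj H_hyp] hyperbolic_fixed_imp_hyperbolic
    unfolding rat_map_P1_iff using Gf by blast
qed

lemma rat_map_hyperbolic_in_every_plane_basis:
  fixes B :: "complex^2^3" and M :: "complex^3^3" and K :: "complex^3 \<Rightarrow> complex^2"
  assumes B: "inj ((*v) B)" and B_range: "range ((*v) B) = P"
    and MK: "\<And>w. M *v F w = B *v K w"
    and Hf: "form_map d (\<lambda>v. K (B *v v))" and H_nz: "\<And>v. v \<noteq> 0 \<Longrightarrow> K (B *v v) \<noteq> 0"
    and H_hyp: "hyperbolic_fixed (\<lambda>v. K (B *v v))"
  shows "\<forall>u1 u2 (G :: complex^2 \<Rightarrow> complex^2).
           P = {s *s u1 + t *s u2 | s t. True} \<and>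
           (\<forall>s t. s *s u1 + t *s u2 = 0 \<longrightarrow> s = 0 \<and> t = 0) \<and>
           (\<forall>v. (G v $ 1) *s u1 + (G v $ 2) *s u2 = M *v F ((v $ 1) *s u1 + (v $ 2) *s u2))
           \<longrightarrow> rat_map_P1 d G \<and> hyperbolic G"
proof (intro allI impI, elim conjE)
  fix u1 u2 and G :: "complex^2 \<Rightarrow> complex^2"
  assume span: "P = {s *s u1 + t *s u2 | s t. True}"
    and indep: "\<forall>s t. s *s u1 + t *s u2 = 0 \<longrightarrow> s = 0 \<and> t = 0"
    and G: "\<forall>v. (G v $ 1) *s u1 + (G v $ 2) *s u2 = M *v F ((v $ 1) *s u1 + (v $ 2) *s u2)"
  obtain C where C: "invertible C" "\<And>v. C *v G v = K (B *v (C *v v))"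
    using plane_coordinates_conj[OF B B_range[unfolded span] indep G[unfolded MK]] by blast
  show "rat_map_P1 d G \<and> hyperbolic G"
    by (rule rat_map_hyperbolic_conj[of C d "\<lambda>v. K (B *v v)", OF C(1) Hf H_nz H_hyp C(2)])
qed

theorem mainTheorem8:
  fixes d :: nat and Fc :: "3 \<Rightarrow> nat \<Rightarrow> nat \<Rightarrow> complex"
    and a p0 :: "complex^3"
  assumes f_map: "rat_map_P2 d Fc"
    and f_dom: "dominant d Fc"
    and a_nz: "a \<noteq> 0"
    and L0_not_exc: "\<not> exceptional d Fc (pline a)"
    and L0_disj: "pline a \<inter> indet d Fc = {}"
    and p0_nz: "p0 \<noteq> 0"
    and p0_notin: "p0 \<notin> pline a \<union> fimage d Fc (pline a)"
  shows "\<exists>M :: complex^3^3.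
           {x. M *v x = 0} = {c *s p0 | c. True} \<and>
           range (\<lambda>x. M *v x) = {w. lin3 a w = 0} \<and>
           (\<forall>u1 u2 (G :: complex^2 \<Rightarrow> complex^2).
              {w. lin3 a w = 0} = {s *s u1 + t *s u2 | s t. True} \<and>
              (\<forall>s t. s *s u1 + t *s u2 = 0 \<longrightarrow> s = 0 \<and> t = 0) \<and>
              (\<forall>v. (G v $ 1) *s u1 + (G v $ 2) *s u2
                     = M *v Fv d Fc ((v $ 1) *s u1 + (v $ 2) *s u2))
              \<longrightarrow> rat_map_P1 d G \<and> hyperbolic G)"
proof -
  obtain \<Lambda> :: "complex^3^2" where \<Lambda>_ker: "{x. \<Lambda> *v x = 0} = {c *s p0 | c. True}" and \<Lambda>_surj: "surj ((*v) \<Lambda>)"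
    by (rule exists_matrix_kernel_line[OF p0_nz])
  obtain B :: "complex^2^3" where B_inj: "inj ((*v) B)" and B_range: "range ((*v) B) = {w. lin3 a w = 0}"
    by (rule exists_matrix_range_plane[OF a_nz])
  have g_form: "form_map d (\<lambda>v. \<Lambda> *v Fv d Fc (B *v v))" by (rule form_map_restrict_to_plane)
  have g_nz: "\<Lambda> *v Fv d Fc (B *v v) \<noteq> 0" if "v \<noteq> 0" for v
    using p0_notin by (intro restriction_nonvanishing[OF \<Lambda>_ker B_inj B_range L0_disj _ that]) simp
  obtain A where A: "invertible A" "hyperbolic_fixed (\<lambda>v. A *v (\<Lambda> *v Fv d Fc (B *v v)))"
    by (rule exists_matrix_hyperbolic_fixed[OF g_form g_nz])
  have Ag_nz: "A *v (\<Lambda> *v Fv d Fc (B *v v)) \<noteq> 0" if "v \<noteq> 0" for v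
    using g_nz[OF that] invertible_matrix_vector_eq_0[OF A(1)] by simp
  have M: "(B ** A ** \<Lambda>) *v w = B *v (A *v (\<Lambda> *v w))" for w
    by (simp add: matrix_vector_mul_assoc matrix_mul_assoc)
  show ?thesis
  proof (intro exI[of _ "B ** A ** \<Lambda>"] conjI)
    show "{x. (B ** A ** \<Lambda>) *v x = 0} = {c *s p0 | c. True}"
      unfolding kernel_matrix_triple[OF B_inj A(1)] by (rule \<Lambda>_ker)
    show "range (\<lambda>x. (B ** A ** \<Lambda>) *v x) = {w. lin3 a w = 0}"
      using range_matrix_triple[OF A(1) \<Lambda>_surj] B_range by simp
  qed (rule rat_map_hyperbolic_in_every_plane_basis[OF B_inj B_range M
        form_map_matrix_mult[OF g_form] Ag_nz A(2)])
qed

end
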